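(* Let $T=(V,E)$ be a finite undirected tree, let $\mathcal{O}$ be a nonempty proper subset of $V$, and consider the infection model described in the context with source $s\in V\setminus\mathcal{O}$. Then, with probability one, a class $r\in[\mathcal{O}]$ is feasible if and only if $\operatorname{argmin}_{o\in\mathcal{O}}\tau_o\in\partial r$. In particular, almost surely at least one feasible equivalence class exists, and the set of feasible classes forms a star arrangement.
   Context: Infection model: an infection starts at time $0$ at a single node $s$ (the source). For each edge $e\in E$ there is a nonnegative random delay $\tau_e$ with a continuous (atomless) distribution, and the $\tau_e$, $e\in E$, are independent. For $u,v\in V$, $[u,v]$ denotes the set of edges (or vertices, depending on context) of the unique path in $T$ between $u$ and $v$. The infection time of $v\in V$ is $\tau_v:=\sum_{e\in[s,v]}\tau_e$. The observers are the nodes of $\mathcal{O}$. Equivalence classes: for $u,v\in V\setminus\mathcal{O}$, $u\equiv v$ iff $[u,v]\cap\mathcal{O}=\emptyset$ (vertex sets). $[\mathcal{O}]$ is the set of equivalence classes. For $r\in[\mathcal{O}]$, its boundary $\partial r$ is the set of observers adjacent to some node of $r$. For $o\in\mathcal{O}$ and a class $r$, $V_{o;r}:=\{v\in V: [o,v]\cap r=\emptyset\}$, and $T_{o;r}$ is the subtree of $T$ induced on $V_{o;r}$, rooted at $o$. A class $r$ is feasible if for every $o\in\partial r$ and every $o_1,o_2\in V_{o;r}\cap\mathcal{O}$ with $o_1$ an ancestor of $o_2$ in $T_{o;r}$, one has $\tau_{o_1}\le\tau_{o_2}$. A set $R\subset[\mathcal{O}]$ of classes is a star arrangement if $\bigcap_{r\in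 R}\partial r\neq\emptyset$. *)

theory Defs
  imports "HOL-Probability.Probability"
begin

definition is_path :: "'a set set \<Rightarrow> 'a list \<Rightarrow> 'a \<Rightarrow> 'a \<Rightarrow> bool" where
  "is_path E p u v \<longleftrightarrow> p \<noteq> [] \<and> hd p = u \<and> last p = v \<and> distinct p \<and>
     (\<forall>i. Suc i < length p \<longrightarrow> {p ! i, p ! Suc i} \<in> E)"

definition is_tree :: "'a set \<Rightarrow> 'a set set \<Rightarrow> bool" where
  "is_tree V E \<longleftrightarrow> finite V \<and>
     (\<forall>e\<in>E. \<exists>u v. e = {u, v} \<and> u \<noteq> v \<and> u \<in> V \<and> v \<in> V) \<and>
     (\<forall>u\<in>V. \<forall>v\<in>V. \<exists>!p. is_path E p u v)"

definition tree_path :: "'a set set \<Rightarrow> 'a \<Rightarrow> 'a \<Rightarrow> 'a list" where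
  "tree_path E u v = (THE p. is_path E p u v)"

definition path_verts :: "'a set set \<Rightarrow> 'a \<Rightarrow> 'a \<Rightarrow> 'a set" where
  "path_verts E u v = set (tree_path E u v)"

definition path_edges :: "'a set set \<Rightarrow> 'a \<Rightarrow> 'a \<Rightarrow> 'a set set" where
  "path_edges E u v = (let p = tree_path E u v in
     {{p ! i, p ! Suc i} | i. Suc i < length p})"

definition inf_time :: "'a set set \<Rightarrow> 'a \<Rightarrow> ('a set \<Rightarrow> real) \<Rightarrow> 'a \<Rightarrow> real" where
  "inf_time E s \<tau> v = (\<Sum>e\<in>path_edges E s v. \<tau> e)"

definition obs_classes :: "'a set \<Rightarrow> 'a set set \<Rightarrow> 'a set \<Rightarrow> 'a set set" where
  "obs_classes V E Obs = {{v \<in> V - Obs. path_verts E u v \<inter> Obs = {}} | u. u \<in> V - Obs}"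

definition boundary :: "'a set set \<Rightarrow> 'a set \<Rightarrow> 'a set \<Rightarrow> 'a set" where
  "boundary E Obs r = {ob \<in> Obs. \<exists>v\<in>r. {ob, v} \<in> E}"

definition V_or :: "'a set \<Rightarrow> 'a set set \<Rightarrow> 'a \<Rightarrow> 'a set \<Rightarrow> 'a set" where
  "V_or V E ob r = {v \<in> V. path_verts E ob v \<inter> r = {}}"

text \<open>Ancestor relation in T_{ob;r} rooted at ob: ob1 lies on the path from the root ob to ob2.\<close>
definition ancestor :: "'a set set \<Rightarrow> 'a \<Rightarrow> 'a \<Rightarrow> 'a \<Rightarrow> bool" where
  "ancestor E ob ob1 ob2 \<longleftrightarrow> ob1 \<in> path_verts E ob ob2"

definition feasible ::
  "'a set \<Rightarrow> 'a set set \<Rightarrow> 'a set \<Rightarrow> 'a \<Rightarrow> ('a set \<Rightarrow> real) \<Rightarrow> 'a set \<Rightarrow> bool" where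
  "feasible V E Obs s \<tau> r \<longleftrightarrow>
     (\<forall>ob\<in>boundary E Obs r. \<forall>ob1\<in>V_or V E ob r \<inter> Obs. \<forall>ob2\<in>V_or V E ob r \<inter> Obs.
        ancestor E ob ob1 ob2 \<longrightarrow> inf_time E s \<tau> ob1 \<le> inf_time E s \<tau> ob2)"

definition star_arrangement :: "'a set set \<Rightarrow> 'a set \<Rightarrow> 'a set set \<Rightarrow> bool" where
  "star_arrangement E Obs R \<longleftrightarrow> (\<Inter>r\<in>R. boundary E Obs r) \<noteq> {}"

end

theory Submission
  imports Defs
begin

text \<open>
  Let \<open>o\<^sup>*\<close> be the observer infected first. Delays are nonnegative, so infection times grow
  along paths leaving \<open>s\<close>; hence \<open>o\<^sup>*\<close> is the only observer on \<open>[s, o\<^sup>*]\<close> and borders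
  the class of \<open>s\<close>. If \<open>o\<^sup>*\<close> borders a class \<open>r\<close>, then an observer \<open>o\<^sub>1\<close> that is an
  ancestor of \<open>o\<^sub>2\<close> in some \<open>T\<^sub>o\<^sub>;\<^sub>r\<close> either lies on \<open>[s, o\<^sub>2]\<close> or is \<open>o\<^sup>*\<close> itself,
  and in both cases it is infected no later than \<open>o\<^sub>2\<close>. If \<open>o\<^sup>*\<close> does not border \<open>r\<close>, the
  path from \<open>r\<close> to \<open>o\<^sup>*\<close> leaves \<open>r\<close> through a boundary observer \<open>w \<noteq> o\<^sup>*\<close>, the root of a
  tree \<open>T\<^sub>w\<^sub>;\<^sub>r\<close> containing \<open>o\<^sup>*\<close>, and feasibility would infect \<open>w\<close> no later than \<open>o\<^sup>*\<close>.

  The argument only needs the observers to have pairwise distinct infection times. This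
  holds almost surely: distinct observers have distinct edge sets \<open>[s, o]\<close>, and a sum of
  independent delays that differs from another one by an atomless delay equals it with
  probability zero.
\<close>

section \<open>Paths in trees\<close>

lemma is_path_take:
  assumes "is_path E p u v" "i < length p"
  shows "is_path E (take (Suc i) p) u (p ! i)"
  using assms unfolding is_path_def
  by (auto simp: hd_conv_nth last_conv_nth min_def intro: arg_cong[where f = "(!) p"])

lemma is_path_drop:
  assumes "is_path E p u v" "i < length p"
  shows "is_path E (drop i p) (p ! i) v"
  using assms unfolding is_path_def
  by (auto simp: hd_drop_conv_nth last_drop)

lemma is_path_rev:
  assumes "is_path E p u v"
  shows "is_path E (rev p) v u"
proof -
  have "{rev p ! i, rev p ! Suc i} \<in> E" if "Suc i < length p" for i
  proof -
    define j where "j = length p - Suc (Suc i)"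
    have "rev p ! i = p ! Suc j" "rev p ! Suc i = p ! j"
      using that by (auto simp: rev_nth j_def Suc_diff_Suc)
    moreover have "{p ! j, p ! Suc j} \<in> E"
      using assms that unfolding is_path_def j_def by auto
    ultimately show ?thesis by (simp add: insert_commute)
  qed
  then show ?thesis using assms unfolding is_path_def by (auto simp: hd_rev last_rev)
qed

lemma is_path_Cons:
  assumes "is_path E p v w" "{u, v} \<in> E" "u \<notin> set p"
  shows "is_path E (u # p) u w"
  using assms unfolding is_path_def
  by (auto simp: hd_conv_nth nth_Cons split: nat.split)

lemma is_path_ConsD:
  assumes "is_path E (x # p) u w" "p \<noteq> []"
  shows "x = u" "{u, hd p} \<in> E" "is_path E p (hd p) w"
proof -
  have "\<forall>i. Suc i < length (x # p) \<longrightarrow> {(x # p) ! i, (x # p) ! Suc i} \<in> E"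
    using assms(1) unfolding is_path_def by blast
  then have "{x, p ! 0} \<in> E" "\<forall>i. Suc i < length p \<longrightarrow> {p ! i, p ! Suc i} \<in> E"
    using assms(2) by (auto dest: spec[of _ 0] spec[of _ "Suc _"])
  then show "x = u" "{u, hd p} \<in> E" "is_path E p (hd p) w"
    using assms unfolding is_path_def by (auto simp: hd_conv_nth)
qed

lemma is_path_singleton: "is_path E [u] u u"
  unfolding is_path_def by auto

lemma is_path_edge: "{u, v} \<in> E \<Longrightarrow> u \<noteq> v \<Longrightarrow> is_path E [u, v] u v"
  unfolding is_path_def by (auto simp: less_Suc_eq)

locale finite_tree =
  fixes V :: "'a set" and E :: "'a set set"
  assumes is_tree: "is_tree V E"
begin

lemma finite_V: "finite V"
  using is_tree by (simp add: is_tree_def)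

lemma edge_doubleton: "e \<in> E \<Longrightarrow> \<exists>u v. e = {u, v} \<and> u \<noteq> v \<and> u \<in> V \<and> v \<in> V"
  using is_tree unfolding is_tree_def by (elim conjE) simp

lemma unique_path: "u \<in> V \<Longrightarrow> v \<in> V \<Longrightarrow> \<exists>!p. is_path E p u v"
  using is_tree unfolding is_tree_def by (elim conjE) simp

lemma edge_subset_V: "e \<in> E \<Longrightarrow> e \<subseteq> V"
  using edge_doubleton by blast

lemma edge_neq: "{u, v} \<in> E \<Longrightarrow> u \<noteq> v"
  using edge_doubleton by (metis doubleton_eq_iff)

lemma finite_E: "finite E"
  using finite_V edge_subset_V by (meson PowI finite_Pow_iff finite_subset subsetI)

lemma is_path_subset_V:
  assumes "is_path E p u v" "u \<in> V"
  shows "set p \<subseteq> V"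
proof
  fix x assume "x \<in> set p"
  then obtain k where k: "k < length p" "p ! k = x" by (auto simp: in_set_conv_nth)
  show "x \<in> V"
  proof (cases k)
    case 0
    then show ?thesis using assms k by (auto simp: is_path_def hd_conv_nth)
  next
    case (Suc j)
    then have "{p ! j, x} \<in> E" using assms k by (auto simp: is_path_def)
    then show ?thesis using edge_subset_V by blast
  qed
qed

lemma tree_path_is_path: "u \<in> V \<Longrightarrow> v \<in> V \<Longrightarrow> is_path E (tree_path E u v) u v"
  unfolding tree_path_def by (rule theI'[OF unique_path])

lemma tree_path_eqI: "is_path E p u v \<Longrightarrow> u \<in> V \<Longrightarrow> v \<in> V \<Longrightarrow> tree_path E u v = p"
  unfolding tree_path_def by (rule the1_equality[OF unique_path])

lemma path_verts_eqI: "is_path E p u v \<Longrightarrow> u \<in> V \<Longrightarrow> v \<in> V \<Longrightarrow> path_verts E u v = set p"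
  unfolding path_verts_def by (simp add: tree_path_eqI)

lemma path_verts_subset_V: "u \<in> V \<Longrightarrow> v \<in> V \<Longrightarrow> path_verts E u v \<subseteq> V"
  unfolding path_verts_def using tree_path_is_path is_path_subset_V by blast

lemma path_verts_refl: "u \<in> V \<Longrightarrow> path_verts E u u = {u}"
  using path_verts_eqI[OF is_path_singleton] by simp

lemma path_verts_commute: "u \<in> V \<Longrightarrow> v \<in> V \<Longrightarrow> path_verts E u v = path_verts E v u"
  using path_verts_eqI[OF is_path_rev[OF tree_path_is_path]] by (simp add: path_verts_def)

lemma left_mem_path_verts: "u \<in> V \<Longrightarrow> v \<in> V \<Longrightarrow> u \<in> path_verts E u v"
  using tree_path_is_path[of u v] unfolding path_verts_def is_path_def by (metis hd_in_set)

lemma right_mem_path_verts: "u \<in> V \<Longrightarrow> v \<in> V \<Longrightarrow> v \<in> path_verts E u v"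
  using tree_path_is_path[of u v] unfolding path_verts_def is_path_def by (metis last_in_set)

lemma path_verts_edge: "{u, v} \<in> E \<Longrightarrow> path_verts E u v = {u, v}"
  using path_verts_eqI[OF is_path_edge] edge_neq edge_subset_V by fastforce

lemma path_verts_take:
  assumes "u \<in> V" "v \<in> V" "i < length (tree_path E u v)"
  shows "path_verts E u (tree_path E u v ! i) = set (take (Suc i) (tree_path E u v))"
proof -
  have P: "is_path E (tree_path E u v) u v" using tree_path_is_path assms by blast
  then have "tree_path E u v ! i \<in> V" using is_path_subset_V assms nth_mem by blast
  then show ?thesis using path_verts_eqI[OF is_path_take[OF P assms(3)]] assms by blast
qed

lemma path_verts_drop:
  assumes "u \<in> V" "v \<in> V" "i < length (tree_path E u v)"
  shows "path_verts E (tree_path E u v ! i) v = set (drop i (tree_path E u v))"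
proof -
  have P: "is_path E (tree_path E u v) u v" using tree_path_is_path assms by blast
  then have "tree_path E u v ! i \<in> V" using is_path_subset_V assms nth_mem by blast
  then show ?thesis using path_verts_eqI[OF is_path_drop[OF P assms(3)]] assms by blast
qed


lemma path_verts_subpath:
  assumes "u \<in> V" "v \<in> V" "w \<in> path_verts E u v"
  shows "path_verts E u w \<subseteq> path_verts E u v" "path_verts E w v \<subseteq> path_verts E u v"
    "path_edges E u w \<subseteq> path_edges E u v"
    "w \<noteq> v \<Longrightarrow> v \<notin> path_verts E u w"
proof -
  define p where "p = tree_path E u v"
  obtain i where i: "i < length p" "p ! i = w"
    using assms(3) unfolding path_verts_def p_def[symmetric] by (auto simp: in_set_conv_nth)
  have prefix: "path_verts E u w = set (take (Suc i) p)"
    using path_verts_take[OF assms(1,2)] i unfolding p_def by blast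
  show "path_verts E u w \<subseteq> path_verts E u v"
    unfolding prefix by (simp add: path_verts_def p_def set_take_subset)
  show "path_verts E w v \<subseteq> path_verts E u v"
    using path_verts_drop[OF assms(1,2)] i unfolding path_verts_def p_def by (metis set_drop_subset)
  have "tree_path E u w = take (Suc i) p"
    using tree_path_eqI[OF is_path_take] tree_path_is_path assms i path_verts_subset_V
    unfolding p_def by blast
  then show "path_edges E u w \<subseteq> path_edges E u v"
    unfolding path_edges_def Let_def p_def by auto
  assume "w \<noteq> v"
  have P: "is_path E p u v" using tree_path_is_path assms unfolding p_def by blast
  then have "p ! (length p - 1) = v" "distinct p" by (auto simp: is_path_def last_conv_nth)
  then show "v \<notin> path_verts E u w"
    using i \<open>w \<noteq> v\<close> unfolding prefix
    by (auto simp: in_set_conv_nth nth_eq_iff_index_eq)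
qed

lemma path_verts_edge_cases:
  assumes "{u, v} \<in> E" "w \<in> V"
  shows "u \<in> path_verts E v w \<or> path_verts E u w = insert u (path_verts E v w)"
proof (cases "u \<in> path_verts E v w")
  case False
  have uV: "u \<in> V" and vV: "v \<in> V" using assms edge_subset_V by auto
  have "is_path E (u # tree_path E v w) u w"
    using is_path_Cons[OF tree_path_is_path[OF vV assms(2)] assms(1)] False
    unfolding path_verts_def by blast
  then show ?thesis using path_verts_eqI uV assms(2) unfolding path_verts_def by auto
qed simp

lemma path_verts_edge_subset:
  assumes "{u, v} \<in> E" "w \<in> V"
  shows "path_verts E u w \<subseteq> insert u (path_verts E v w)"
  using path_verts_edge_cases[OF assms] path_verts_subpath(2) assms edge_subset_V by blast

lemma path_verts_subset_path:
  assumes "is_path E p u v" "u \<in> V" "w \<in> V"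
  shows "path_verts E u w \<subseteq> set p \<union> path_verts E v w"
  using assms(1,2)
proof (induction p arbitrary: u)
  case Nil
  then show ?case by (simp add: is_path_def)
next
  case (Cons x p)
  show ?case
  proof (cases "p = []")
    case True
    then show ?thesis using Cons.prems by (auto simp: is_path_def)
  next
    case False
    note step = is_path_ConsD[OF Cons.prems(1) False]
    have "hd p \<in> V" using step(2) edge_subset_V by blast
    then have "path_verts E (hd p) w \<subseteq> set p \<union> path_verts E v w"
      using Cons.IH step(3) by blast
    then show ?thesis using path_verts_edge_subset[OF step(2) assms(3)] step(1) by auto
  qed
qed

lemma path_verts_triangle:
  "u \<in> V \<Longrightarrow> v \<in> V \<Longrightarrow> w \<in> V \<Longrightarrow> path_verts E u w \<subseteq> path_verts E u v \<union> path_verts E v w"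
  using path_verts_subset_path[OF tree_path_is_path] unfolding path_verts_def by blast

lemma path_edges_subset_E: "u \<in> V \<Longrightarrow> v \<in> V \<Longrightarrow> path_edges E u v \<subseteq> E"
  using tree_path_is_path[of u v] unfolding path_edges_def is_path_def Let_def by auto

lemma finite_path_edges: "u \<in> V \<Longrightarrow> v \<in> V \<Longrightarrow> finite (path_edges E u v)"
  using path_edges_subset_E finite_E finite_subset by blast

lemma Union_path_edges:
  assumes "u \<in> V" "v \<in> V" "u \<noteq> v"
  shows "\<Union>(path_edges E u v) = path_verts E u v"
proof -
  define p where "p = tree_path E u v"
  have P: "is_path E p u v" using tree_path_is_path assms unfolding p_def by blast
  have "length p \<noteq> 1"
    using P assms(3) by (auto simp: is_path_def length_Suc_conv)
  then have len: "Suc 0 < length p" using P by (cases p) (auto simp: is_path_def)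
  have "x \<in> \<Union>{{p ! i, p ! Suc i} | i. Suc i < length p}" if "k < length p" "p ! k = x" for k x
  proof (cases k)
    case 0
    then show ?thesis using that len by blast
  next
    case (Suc j)
    then show ?thesis using that by blast
  qed
  moreover have "p ! i \<in> set p" "p ! Suc i \<in> set p" if "Suc i < length p" for i
    using that by simp_all
  ultimately have "\<Union>{{p ! i, p ! Suc i} | i. Suc i < length p} = set p"
    by (auto simp: in_set_conv_nth)
  then show ?thesis unfolding path_edges_def path_verts_def Let_def p_def[symmetric] by simp
qed

lemma path_edges_inj:
  assumes "u \<in> V" "v \<in> V" "w \<in> V" "u \<noteq> v" "u \<noteq> w" "path_edges E u v = path_edges E u w"
  shows "v = w"
proof (rule ccontr)
  assume "v \<noteq> w"
  have eq: "path_verts E u v = path_verts E u w" using Union_path_edges assms by metis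
  then have "w \<in> path_verts E u v" using right_mem_path_verts assms by blast
  then have "v \<notin> path_verts E u w" using path_verts_subpath(4) assms \<open>v \<noteq> w\<close> by metis
  then show False using eq right_mem_path_verts assms by blast
qed

end

section \<open>Classes of non-observers\<close>

definition obs_class :: "'a set \<Rightarrow> 'a set set \<Rightarrow> 'a set \<Rightarrow> 'a \<Rightarrow> 'a set" where
  "obs_class V E Obs u = {v \<in> V - Obs. path_verts E u v \<inter> Obs = {}}"

lemma obs_classes_eq_image: "obs_classes V E Obs = obs_class V E Obs ` (V - Obs)"
  unfolding obs_classes_def obs_class_def by blast

lemma obs_class_not_obs: "v \<in> obs_class V E Obs u \<Longrightarrow> v \<notin> Obs"
  unfolding obs_class_def by blast

lemma boundary_obs: "ob \<in> boundary E Obs r \<Longrightarrow> ob \<in> Obs"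
  unfolding boundary_def by blast

context finite_tree
begin

lemma path_verts_obs_class:
  assumes u: "u \<in> V - Obs" and x: "x \<in> obs_class V E Obs u" and y: "y \<in> obs_class V E Obs u"
  shows "path_verts E x y \<subseteq> obs_class V E Obs u"
proof -
  have from_base: "path_verts E u z \<subseteq> obs_class V E Obs u" if z: "z \<in> obs_class V E Obs u" for z
  proof
    fix w assume w: "w \<in> path_verts E u z"
    have "u \<in> V" "z \<in> V" using u z by (auto simp: obs_class_def)
    then have "w \<in> V" "path_verts E u w \<subseteq> path_verts E u z" "w \<in> path_verts E u w"
      using w path_verts_subset_V path_verts_subpath(1) right_mem_path_verts by blast+
    then show "w \<in> obs_class V E Obs u" using z unfolding obs_class_def by blast
  qed
  have "u \<in> V" "x \<in> V" "y \<in> V" using u x y by (auto simp: obs_class_def)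
  then have "path_verts E x y \<subseteq> path_verts E u x \<union> path_verts E u y"
    using path_verts_triangle path_verts_commute by blast
  then show ?thesis using from_base x y by blast
qed

lemma path_verts_to_boundary:
  assumes u: "u \<in> V - Obs" and v: "v \<in> obs_class V E Obs u"
    and ob: "ob \<in> boundary E Obs (obs_class V E Obs u)"
  shows "path_verts E v ob \<subseteq> insert ob (obs_class V E Obs u)"
proof -
  obtain w where w: "w \<in> obs_class V E Obs u" "{ob, w} \<in> E"
    using ob unfolding boundary_def by blast
  have "v \<in> V" "w \<in> V" "ob \<in> V" using v w edge_subset_V by (auto simp: obs_class_def)
  then have "path_verts E v ob \<subseteq> path_verts E v w \<union> path_verts E w ob"
    using path_verts_triangle by blast
  moreover have "path_verts E w ob = {w, ob}"
    using path_verts_edge w(2) by (simp add: insert_commute)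
  ultimately show ?thesis using path_verts_obs_class[OF u v w(1)] w(1) by auto
qed

lemma tree_path_first_hit:
  assumes u: "u \<in> V" "u \<notin> S" and v: "v \<in> V" "v \<in> S"
  shows "\<exists>j. Suc j < length (tree_path E u v) \<and> tree_path E u v ! Suc j \<in> S \<and>
    set (take (Suc j) (tree_path E u v)) \<inter> S = {}"
proof -
  define p where "p = tree_path E u v"
  define k where "k = length (takeWhile (\<lambda>x. x \<notin> S) p)"
  have P: "is_path E p u v" using tree_path_is_path u v unfolding p_def by blast
  then have "takeWhile (\<lambda>x. x \<notin> S) p \<noteq> p"
    using v(2) by (auto simp: is_path_def)
  then have "k \<noteq> length p"
    unfolding k_def by (metis takeWhile_eq_take take_all_iff order_refl)
  then have k: "k < length p"
    using length_takeWhile_le[of "\<lambda>x. x \<notin> S" p] unfolding k_def by linarith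
  then have "p ! k \<in> S" using nth_length_takeWhile unfolding k_def by blast
  moreover have "set (take k p) \<inter> S = {}"
    unfolding k_def takeWhile_eq_take[symmetric] by (auto dest: set_takeWhileD)
  moreover have "k \<noteq> 0" using P u(2) by (cases p) (auto simp: is_path_def k_def)
  ultimately show ?thesis using k unfolding p_def by (metis not0_implies_Suc)
qed

lemma boundary_on_path:
  assumes u: "u \<in> V - Obs" and ob: "ob \<in> Obs" "ob \<in> V"
  shows "\<exists>w \<in> boundary E Obs (obs_class V E Obs u).
    w \<in> path_verts E u ob \<and> path_verts E w ob \<inter> obs_class V E Obs u = {}"
proof -
  let ?r = "obs_class V E Obs u"
  define p where "p = tree_path E u ob"
  have uV: "u \<in> V" using u by blast
  obtain j where j: "Suc j < length p" "p ! Suc j \<in> Obs" "set (take (Suc j) p) \<inter> Obs = {}"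
    using tree_path_first_hit[OF uV _ ob(2,1)] u unfolding p_def by blast
  have prefix: "path_verts E u (p ! i) = set (take (Suc i) p)" if "i < length p" for i
    using path_verts_take[OF uV ob(2)] that unfolding p_def by blast
  have nth_in_take: "p ! i \<in> set (take (Suc k) p)" if "i \<le> k" "k < length p" for i k
  proof -
    have "take (Suc k) p ! i \<in> set (take (Suc k) p)" using that by (intro nth_mem) simp
    then show ?thesis using that by simp
  qed
  have P: "is_path E p u ob" using tree_path_is_path uV ob unfolding p_def by blast
  then have "p ! j \<in> V" using is_path_subset_V uV j(1) by (meson Suc_lessD nth_mem subsetD)
  moreover have "p ! j \<in> set (take (Suc j) p)" using nth_in_take j(1) by simp
  ultimately have "p ! j \<in> ?r"
    using prefix[of j] j unfolding obs_class_def by auto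
  moreover have "{p ! Suc j, p ! j} \<in> E"
    using P j(1) by (auto simp: is_path_def insert_commute)
  ultimately have "p ! Suc j \<in> boundary E Obs ?r"
    using j(2) unfolding boundary_def by blast
  moreover have "p ! Suc j \<in> path_verts E u ob"
    unfolding path_verts_def p_def[symmetric] using j(1) by simp
  moreover have "x \<notin> ?r" if "x \<in> path_verts E (p ! Suc j) ob" for x
  proof -
    have "x \<in> set (drop (Suc j) p)"
      using that path_verts_drop[OF uV ob(2) j(1)[unfolded p_def]] unfolding p_def by simp
    then obtain i where "i < length p - Suc j" and x: "p ! (Suc j + i) = x"
      by (auto simp: in_set_conv_nth)
    then have i: "Suc j + i < length p" by simp
    have "p ! Suc j \<in> path_verts E u x" using prefix[OF i] nth_in_take[OF _ i] x by simp
    then show ?thesis using j(2) unfolding obs_class_def by blast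
  qed
  ultimately show ?thesis by blast
qed

end

section \<open>Feasible classes\<close>

locale infection = finite_tree +
  fixes Obs :: "'a set" and s :: 'a and \<tau> :: "'a set \<Rightarrow> real"
  assumes obs_subset_V: "Obs \<subseteq> V" and obs_nonempty: "Obs \<noteq> {}"
    and source: "s \<in> V - Obs"
    and delays_nonneg: "\<And>e. e \<in> E \<Longrightarrow> 0 \<le> \<tau> e"
    and inf_times_distinct: "inj_on (inf_time E s \<tau>) Obs"
begin

abbreviation first_obs :: 'a where
  "first_obs \<equiv> arg_min_on (inf_time E s \<tau>) Obs"

lemma inf_time_mono:
  assumes "y \<in> V" "x \<in> path_verts E s y"
  shows "inf_time E s \<tau> x \<le> inf_time E s \<tau> y"
proof -
  have "s \<in> V" using source by blast
  then have "path_edges E s x \<subseteq> path_edges E s y" "path_edges E s y \<subseteq> E"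
    using assms path_verts_subpath(3) path_edges_subset_E by blast+
  then show ?thesis
    unfolding inf_time_def using finite_path_edges \<open>s \<in> V\<close> assms(1) delays_nonneg
    by (intro sum_mono2) auto
qed

lemma finite_Obs: "finite Obs"
  using finite_subset[OF obs_subset_V finite_V] .

lemma first_obs_mem: "first_obs \<in> Obs"
  using arg_min_if_finite(1)[OF finite_Obs obs_nonempty] .

lemma first_obs_le: "ob \<in> Obs \<Longrightarrow> inf_time E s \<tau> first_obs \<le> inf_time E s \<tau> ob"
  using arg_min_least[OF finite_Obs obs_nonempty] by blast

lemma first_obs_less:
  "ob \<in> Obs \<Longrightarrow> ob \<noteq> first_obs \<Longrightarrow> inf_time E s \<tau> first_obs < inf_time E s \<tau> ob"
  using first_obs_le first_obs_mem inf_times_distinct by (metis inj_onD order_le_less)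

lemma obs_on_path_to_first_obs:
  assumes "ob \<in> Obs" "ob \<in> path_verts E s first_obs"
  shows "ob = first_obs"
  using inf_time_mono[OF _ assms(2)] first_obs_less[OF assms(1)] first_obs_mem obs_subset_V
  by fastforce

lemma boundary_first_obs_cases:
  assumes u: "u \<in> V - Obs" and first: "first_obs \<in> boundary E Obs (obs_class V E Obs u)"
    and ob: "ob \<in> boundary E Obs (obs_class V E Obs u)"
    and o1: "o1 \<in> Obs" "o1 \<in> path_verts E ob o2" and o2: "o2 \<in> V_or V E ob (obs_class V E Obs u)"
  shows "o1 \<in> path_verts E s o2 \<or> o1 = first_obs"
proof -
  let ?r = "obs_class V E Obs u"
  obtain v where v: "v \<in> ?r" "{ob, v} \<in> E" using ob unfolding boundary_def by blast
  have "s \<in> V" "first_obs \<in> V" using source first_obs_mem obs_subset_V by blast+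
  moreover have "v \<in> V" "ob \<in> V" using edge_subset_V[OF v(2)] by blast+
  moreover have "o2 \<in> V" using o2 unfolding V_or_def by blast
  ultimately have V: "s \<in> V" "v \<in> V" "ob \<in> V" "o2 \<in> V" "first_obs \<in> V" by blast+
  have via_v: "x = first_obs" if "x \<in> Obs" "x \<in> path_verts E v s" for x
  proof -
    have "x \<in> path_verts E v first_obs \<union> path_verts E s first_obs"
      using that(2) path_verts_triangle[OF V(2,5,1)] path_verts_commute[OF V(5,1)] by blast
    then show ?thesis
      using path_verts_to_boundary[OF u v(1) first] obs_on_path_to_first_obs[OF that(1)] that(1)
      by (auto dest: obs_class_not_obs)
  qed
  have "o1 \<in> path_verts E s o2 \<or> o1 \<in> path_verts E ob s"
    using o1(2) path_verts_triangle[OF V(3,1,4)] by blast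
  moreover have "path_verts E ob s \<subseteq> insert ob (path_verts E v s)"
    using path_verts_edge_subset[OF v(2) V(1)] .
  moreover have "ob \<in> path_verts E s o2 \<or> ob = first_obs"
  proof -
    have "v \<notin> path_verts E ob o2" using o2 v(1) unfolding V_or_def by blast
    then have "ob \<in> path_verts E v o2"
      using path_verts_edge_cases[OF v(2) V(4)] left_mem_path_verts[OF V(2,4)] by auto
    then have "ob \<in> path_verts E v s \<or> ob \<in> path_verts E s o2"
      using path_verts_triangle[OF V(2,1,4)] by blast
    then show ?thesis using via_v boundary_obs[OF ob] by blast
  qed
  ultimately show ?thesis using via_v o1(1) by blast
qed

lemma feasible_imp_first_obs_in_boundary:
  assumes u: "u \<in> V - Obs" and feasible: "feasible V E Obs s \<tau> (obs_class V E Obs u)"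
  shows "first_obs \<in> boundary E Obs (obs_class V E Obs u)"
proof -
  let ?r = "obs_class V E Obs u"
  have first: "first_obs \<in> Obs" "first_obs \<in> V" using first_obs_mem obs_subset_V by blast+
  obtain w where w: "w \<in> boundary E Obs ?r" "path_verts E w first_obs \<inter> ?r = {}"
    using boundary_on_path[OF u first] by blast
  have "w \<in> Obs" using boundary_obs[OF w(1)] .
  then have "w \<in> V" using obs_subset_V by blast
  have "w \<notin> ?r" using obs_class_not_obs \<open>w \<in> Obs\<close> by metis
  then have "w \<in> V_or V E w ?r \<inter> Obs" "first_obs \<in> V_or V E w ?r \<inter> Obs"
    using \<open>w \<in> V\<close> \<open>w \<in> Obs\<close> w(2) first path_verts_refl unfolding V_or_def by auto
  moreover have "ancestor E w w first_obs"
    unfolding ancestor_def using left_mem_path_verts \<open>w \<in> V\<close> first by blast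
  ultimately have "inf_time E s \<tau> w \<le> inf_time E s \<tau> first_obs"
    using feasible w(1) unfolding feasible_def by blast
  then have "w = first_obs" using first_obs_less \<open>w \<in> Obs\<close> by fastforce
  then show ?thesis using w(1) by simp
qed

lemma first_obs_in_boundary_imp_feasible:
  assumes u: "u \<in> V - Obs" and first: "first_obs \<in> boundary E Obs (obs_class V E Obs u)"
  shows "feasible V E Obs s \<tau> (obs_class V E Obs u)"
  unfolding feasible_def
proof (intro ballI impI)
  fix ob o1 o2
  assume ob: "ob \<in> boundary E Obs (obs_class V E Obs u)"
    and o1: "o1 \<in> V_or V E ob (obs_class V E Obs u) \<inter> Obs"
    and o2: "o2 \<in> V_or V E ob (obs_class V E Obs u) \<inter> Obs"
    and "ancestor E ob o1 o2"
  then have "o1 \<in> path_verts E s o2 \<or> o1 = first_obs"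
    using boundary_first_obs_cases[OF u first ob] unfolding ancestor_def by blast
  moreover have "o2 \<in> V" "o2 \<in> Obs" using o2 unfolding V_or_def by blast+
  ultimately show "inf_time E s \<tau> o1 \<le> inf_time E s \<tau> o2"
    using inf_time_mono first_obs_le by blast
qed

lemma feasible_iff_first_obs_in_boundary:
  "r \<in> obs_classes V E Obs \<Longrightarrow> feasible V E Obs s \<tau> r \<longleftrightarrow> first_obs \<in> boundary E Obs r"
  using feasible_imp_first_obs_in_boundary first_obs_in_boundary_imp_feasible
  unfolding obs_classes_eq_image by blast

lemma first_obs_in_boundary_source_class: "first_obs \<in> boundary E Obs (obs_class V E Obs s)"
proof -
  have "first_obs \<in> Obs" "first_obs \<in> V" using first_obs_mem obs_subset_V by blast+
  then obtain w where "w \<in> path_verts E s first_obs" "w \<in> boundary E Obs (obs_class V E Obs s)"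
    using boundary_on_path[OF source] by blast
  then show ?thesis using obs_on_path_to_first_obs boundary_obs by metis
qed

lemma ex_feasible_class: "\<exists>r\<in>obs_classes V E Obs. feasible V E Obs s \<tau> r"
  using first_obs_in_boundary_imp_feasible[OF source first_obs_in_boundary_source_class] source
  unfolding obs_classes_eq_image by blast

lemma star_arrangement_feasible_classes:
  "star_arrangement E Obs {r \<in> obs_classes V E Obs. feasible V E Obs s \<tau> r}"
  unfolding star_arrangement_def using feasible_iff_first_obs_in_boundary by blast

end

section \<open>Distinct infection times\<close>

lemma sets_PiM_sum_eq_sum:
  assumes "A \<subseteq> I" "B \<subseteq> I"
  shows "{x \<in> space (\<Pi>\<^sub>M j\<in>I. borel). (\<Sum>j\<in>A. x j) = (\<Sum>j\<in>B. x j :: real)} \<in> sets (\<Pi>\<^sub>M j\<in>I. borel)"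
proof -
  have "(\<lambda>x. \<Sum>j\<in>J. x j :: real) \<in> borel_measurable (\<Pi>\<^sub>M j\<in>I. borel)" if "J \<subseteq> I" for J
    using that by (intro borel_measurable_sum) (auto intro!: measurable_component_singleton)
  then show ?thesis using assms by measurable
qed

lemma emeasure_PiM_sum_eq_sum:
  fixes M :: "'i \<Rightarrow> real measure"
  assumes "product_sigma_finite M" and sets_M: "\<And>j. sets (M j) = sets borel"
    and I: "finite I" "A \<subseteq> I" "B \<subseteq> I" "i \<in> A" "i \<notin> B"
    and atomless: "\<And>c. emeasure (M i) {c} = 0"
  shows "emeasure (\<Pi>\<^sub>M j\<in>I. M j) {x \<in> space (\<Pi>\<^sub>M j\<in>I. M j). (\<Sum>j\<in>A. x j) = (\<Sum>j\<in>B. x j)} = 0"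
    (is "emeasure _ ?S = 0")
proof -
  interpret product_sigma_finite M by fact
  have sets_eq: "sets (\<Pi>\<^sub>M j\<in>J. M j) = sets (\<Pi>\<^sub>M j\<in>J. borel)" for J
    using sets_M by (intro sets_PiM_cong) auto
  then have space_eq: "space (\<Pi>\<^sub>M j\<in>J. M j) = space (\<Pi>\<^sub>M j\<in>J. (borel :: real measure))" for J
    by (rule sets_eq_imp_space_eq)
  have S: "?S \<in> sets (\<Pi>\<^sub>M j\<in>I. M j)"
    unfolding sets_eq space_eq using sets_PiM_sum_eq_sum[OF I(2,3)] .
  have insert_I: "insert i (I - {i}) = I" using I by blast
  have "emeasure (\<Pi>\<^sub>M j\<in>I. M j) ?S = (\<integral>\<^sup>+x. indicator ?S x \<partial>(\<Pi>\<^sub>M j\<in>I. M j))"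
    using S by simp
  also have "\<dots> = (\<integral>\<^sup>+x. (\<integral>\<^sup>+y. indicator ?S (x(i := y)) \<partial>M i) \<partial>(\<Pi>\<^sub>M j\<in>I - {i}. M j))"
    using product_nn_integral_insert[of "I - {i}" i "indicator ?S"] S I(1)
    unfolding insert_I by simp
  \<comment> \<open>Once the other coordinates are fixed, the hyperplane meets coordinate \<open>i\<close> in one point.\<close>
  also have "\<dots> = (\<integral>\<^sup>+x. 0 \<partial>(\<Pi>\<^sub>M j\<in>I - {i}. M j))"
  proof (intro nn_integral_cong)
    fix x assume x: "x \<in> space (\<Pi>\<^sub>M j\<in>I - {i}. M j)"
    define c where "c = (\<Sum>j\<in>B. x j) - (\<Sum>j\<in>A - {i}. x j)"
    have "indicator ?S (x(i := y)) = (indicator {c} y :: ennreal)" for y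
    proof -
      have "x(i := y) \<in> space (\<Pi>\<^sub>M j\<in>I. M j)"
        using x I unfolding space_eq by (auto simp: space_PiM PiE_def extensional_def)
      moreover have "(\<Sum>j\<in>A. (x(i := y)) j) = y + (\<Sum>j\<in>A - {i}. x j)"
        using I finite_subset[OF I(2,1)] by (simp add: sum.remove[of A i])
      moreover have "(\<Sum>j\<in>B. (x(i := y)) j) = (\<Sum>j\<in>B. x j)"
        using I by (intro sum.cong) auto
      ultimately show ?thesis by (auto simp: c_def indicator_def)
    qed
    then show "(\<integral>\<^sup>+y. indicator ?S (x(i := y)) \<partial>M i) = 0"
      using atomless sets_M by simp
  qed
  finally show ?thesis by simp
qed

lemma (in prob_space) emeasure_indep_vars_PiM:
  assumes indep: "indep_vars N X I" and "I \<noteq> {}" and S: "S \<in> sets (\<Pi>\<^sub>M j\<in>I. N j)"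
  shows "emeasure M ((\<lambda>\<omega>. \<lambda>j\<in>I. X j \<omega>) -` S \<inter> space M) = emeasure (\<Pi>\<^sub>M j\<in>I. distr M (N j) (X j)) S"
proof -
  have rv: "random_variable (N j) (X j)" if "j \<in> I" for j
    using indep that unfolding indep_vars_def by blast
  then have "emeasure M ((\<lambda>\<omega>. \<lambda>j\<in>I. X j \<omega>) -` S \<inter> space M)
      = emeasure (distr M (\<Pi>\<^sub>M j\<in>I. N j) (\<lambda>\<omega>. \<lambda>j\<in>I. X j \<omega>)) S"
    using S by (intro emeasure_distr[symmetric] measurable_restrict)
  also have "\<dots> = emeasure (\<Pi>\<^sub>M j\<in>I. distr M (N j) (X j)) S"
    using indep_vars_iff_distr_eq_PiM'[OF \<open>I \<noteq> {}\<close> rv] indep by simp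
  finally show ?thesis .
qed

lemma (in prob_space) AE_sum_ne_sum_indep:
  fixes X :: "'i \<Rightarrow> 'a \<Rightarrow> real"
  assumes indep: "indep_vars (\<lambda>_. borel) X I"
    and I: "finite I" "A \<subseteq> I" "B \<subseteq> I" "i \<in> A" "i \<notin> B"
    and atomless: "\<And>c. prob {\<omega> \<in> space M. X i \<omega> = c} = 0"
  shows "AE \<omega> in M. (\<Sum>j\<in>A. X j \<omega>) \<noteq> (\<Sum>j\<in>B. X j \<omega>)"
proof -
  \<comment> \<open>Extending \<open>X\<close> by constants outside \<open>I\<close> makes the marginals a product family over all indices.\<close>
  define Y where "Y j = (if j \<in> I then X j else (\<lambda>_. 0))" for j
  have [measurable]: "random_variable borel (Y j)" for j
    using indep unfolding indep_vars_def Y_def by auto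
  have indep_Y: "indep_vars (\<lambda>_. borel) Y I"
    using indep by (rule indep_vars_cong[THEN iffD1, rotated 3]) (auto simp: Y_def)
  have product: "product_sigma_finite (\<lambda>j. distr M borel (Y j))"
    by (auto intro!: product_sigma_finite.intro prob_space_imp_sigma_finite prob_space_distr)
  have atomless_Y: "emeasure (distr M borel (Y i)) {c} = 0" for c
  proof -
    have "emeasure (distr M borel (Y i)) {c} = emeasure M (Y i -` {c} \<inter> space M)"
      by (rule emeasure_distr) auto
    also have "Y i -` {c} \<inter> space M = {\<omega> \<in> space M. X i \<omega> = c}"
      using I by (auto simp: Y_def)
    finally show ?thesis using atomless by (simp add: emeasure_eq_measure)
  qed
  define S where "S = {x \<in> space (\<Pi>\<^sub>M j\<in>I. (borel :: real measure)). (\<Sum>j\<in>A. x j) = (\<Sum>j\<in>B. x j)}"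
  have S: "S \<in> sets (\<Pi>\<^sub>M j\<in>I. borel)" unfolding S_def using sets_PiM_sum_eq_sum[OF I(2,3)] .
  have preimage: "{\<omega> \<in> space M. (\<Sum>j\<in>A. X j \<omega>) = (\<Sum>j\<in>B. X j \<omega>)} = (\<lambda>\<omega>. \<lambda>j\<in>I. Y j \<omega>) -` S \<inter> space M"
    using I by (auto simp: S_def Y_def space_PiM subset_iff intro!: sum.cong)
  have "emeasure M ((\<lambda>\<omega>. \<lambda>j\<in>I. Y j \<omega>) -` S \<inter> space M) = emeasure (\<Pi>\<^sub>M j\<in>I. distr M borel (Y j)) S"
    using emeasure_indep_vars_PiM[OF indep_Y _ S] I by blast
  also have "\<dots> = 0"
    using emeasure_PiM_sum_eq_sum[OF product _ I atomless_Y] by (simp add: S_def space_PiM)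
  moreover have "(\<lambda>\<omega>. \<lambda>j\<in>I. Y j \<omega>) -` S \<inter> space M \<in> events"
    by (rule measurable_sets[OF _ S]) measurable
  ultimately show ?thesis
    unfolding preimage[symmetric] by (subst AE_iff_measurable[OF _ refl]) auto
qed

lemma (in finite_tree) AE_inj_on_inf_time:
  fixes X :: "'a set \<Rightarrow> 'w \<Rightarrow> real"
  assumes "prob_space M" and indep: "prob_space.indep_vars M (\<lambda>_. borel) X E"
    and atomless: "\<And>e c. e \<in> E \<Longrightarrow> measure M {\<omega> \<in> space M. X e \<omega> = c} = 0"
    and s: "s \<in> V" and S: "S \<subseteq> V - {s}"
  shows "AE \<omega> in M. inj_on (inf_time E s (\<lambda>e. X e \<omega>)) S"
proof -
  interpret prob_space M by fact
  have sum_ne: "AE \<omega> in M. (\<Sum>e\<in>path_edges E s v. X e \<omega>) \<noteq> (\<Sum>e\<in>path_edges E s w. X e \<omega>)"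
    if "v \<in> S" "w \<in> S" "e \<in> path_edges E s v" "e \<notin> path_edges E s w" for v w e
  proof -
    have sub: "path_edges E s v \<subseteq> E" "path_edges E s w \<subseteq> E"
      using path_edges_subset_E s S that(1,2) by blast+
    then have "e \<in> E" using that(3) by blast
    then show ?thesis
      using AE_sum_ne_sum_indep[OF indep finite_E sub that(3,4) atomless] by blast
  qed
  have "AE \<omega> in M. (\<Sum>e\<in>path_edges E s v. X e \<omega>) \<noteq> (\<Sum>e\<in>path_edges E s w. X e \<omega>)"
    if vw: "v \<in> S" "w \<in> S" "v \<noteq> w" for v w
  proof -
    have "path_edges E s v \<noteq> path_edges E s w"
      using path_edges_inj[OF s] S vw by blast
    then obtain e where "e \<in> path_edges E s v - path_edges E s w \<or> e \<in> path_edges E s w - path_edges E s v"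
      by blast
    then show ?thesis
    proof
      assume "e \<in> path_edges E s v - path_edges E s w"
      then show ?thesis using sum_ne[OF vw(1,2)] by blast
    next
      assume "e \<in> path_edges E s w - path_edges E s v"
      then have "AE \<omega> in M. (\<Sum>e\<in>path_edges E s w. X e \<omega>) \<noteq> (\<Sum>e\<in>path_edges E s v. X e \<omega>)"
        using sum_ne[OF vw(2,1)] by blast
      then show ?thesis by (rule eventually_mono) (rule not_sym)
    qed
  qed
  then have "AE \<omega> in M. \<forall>v\<in>S. \<forall>w\<in>S. v \<noteq> w \<longrightarrow>
      (\<Sum>e\<in>path_edges E s v. X e \<omega>) \<noteq> (\<Sum>e\<in>path_edges E s w. X e \<omega>)"
    using finite_subset[OF S] finite_V by (intro AE_finite_allI) auto
  then show ?thesis by (rule eventually_mono) (auto simp: inj_on_def inf_time_def)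
qed

theorem theorem1:
  fixes V :: "'a set" and E :: "'a set set" and Obs :: "'a set" and s :: 'a
    and M :: "'w measure" and X :: "'a set \<Rightarrow> 'w \<Rightarrow> real"
  assumes tree: "is_tree V E"
    and obs: "Obs \<subseteq> V" "Obs \<noteq> {}" "Obs \<noteq> V"
    and src: "s \<in> V - Obs"
    and P: "prob_space M"
    and indep: "prob_space.indep_vars M (\<lambda>_. borel) X E"
    and atomless: "\<forall>e\<in>E. \<forall>x. measure M {\<omega> \<in> space M. X e \<omega> = x} = 0"
    and nonneg: "\<forall>e\<in>E. AE \<omega> in M. X e \<omega> \<ge> 0"
  shows "AE \<omega> in M.
           (\<forall>r\<in>obs_classes V E Obs.
              feasible V E Obs s (\<lambda>e. X e \<omega>) r \<longleftrightarrow>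
              arg_min_on (\<lambda>ob. inf_time E s (\<lambda>e. X e \<omega>) ob) Obs \<in> boundary E Obs r)
         \<and> (\<exists>r\<in>obs_classes V E Obs. feasible V E Obs s (\<lambda>e. X e \<omega>) r)
         \<and> star_arrangement E Obs {r \<in> obs_classes V E Obs. feasible V E Obs s (\<lambda>e. X e \<omega>) r}"
proof -
  interpret finite_tree V E by (rule finite_tree.intro[OF tree])
  have "AE \<omega> in M. \<forall>e\<in>E. 0 \<le> X e \<omega>"
    using nonneg by (intro AE_finite_allI[OF finite_E]) auto
  moreover have "AE \<omega> in M. inj_on (inf_time E s (\<lambda>e. X e \<omega>)) Obs"
    using AE_inj_on_inf_time[OF P indep] atomless src obs(1) by blast
  ultimately show ?thesis
  proof (eventually_elim)
    case (elim \<omega>)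
    interpret infection V E Obs s "\<lambda>e. X e \<omega>"
      using elim obs src by unfold_locales auto
    show ?case
      using feasible_iff_first_obs_in_boundary ex_feasible_class star_arrangement_feasible_classes
      by blast
  qed
qed

end
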